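(* Let $\mathbb C$ be a pointed category with finite limits and finite colimits. The forgetful functor $\mathsf{MCS}_W(\mathbb C)\to\mathsf{CS}_W(\mathbb C)$ has a left adjoint, which sends a weighted cospan $C=(A,X,x,Y,y,W,w)$ to $((\tilde C,X,\nu_Cx,Y,\nu_Cy,W,\nu_Cw),\mu_C)$, where $$\begin{array}{ccc} W+X+Y & \xrightarrow{[w,x,y]} & A\\ \downarrow{\scriptstyle\langle [\iota_1,\iota_2,0],[\iota_1,0,\iota_2]\rangle} & & \downarrow{\scriptstyle \nu_C}\\ (W+X)\times_W(W+Y) & \xrightarrow{\mu_C} & \tilde C\end{array}$$ is a pushout; the $C$-component of the unit of the adjunction consists of the identity morphisms of $X$, $Y$, $W$ and the morphism $\nu_C\colon A\to\tilde C$.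
   Context: Notation: $\iota_i$ coproduct injections, $[a,b]$, $[a,b,c]$ copairings, $\langle a,b\rangle$ pairing; $(W+X)\times_W(W+Y)$ is the pullback of $[1,0]\colon W+X\to W$ and $[1,0]\colon W+Y\to W$. A weighted cospan $(A,X,x,Y,y,W,w)$ consists of morphisms $w\colon W\to A$, $x\colon X\to A$, $y\colon Y\to A$; a morphism of weighted cospans $(A,X,x,Y,y,W,w)\to(A',X',x',Y',y',W',w')$ is a quadruple of morphisms $a\colon A\to A'$, $f\colon X\to X'$, $g\colon Y\to Y'$, $h\colon W\to W'$ with $af=$ ... precisely $x'f=ax$, $y'g=ay$, $w'h=aw$; these form the category $\mathsf{CS}_W(\mathbb C)$. An internal multiplication $X\times Y\to A$ over $(W,w)$ is a morphism $m\colon (W+X)\times_W(W+Y)\to A$ with $m\langle 1,\iota_1[1,0]\rangle=[w,x]$ and $m\langle \iota_1[1,0],1\rangle=[w,y]$. A multiplicative weighted cospan is a pair $(C,m)$ with $C$ a weighted cospan and $m$ such an internal multiplication; a morphism $(C,m)\to(C',m')$ is a morphism $(a,f,g,h)$ of weighted cospans with $am=m'\circ((h+f)\times_h(h+g))$. These form the category $\mathsf{MCS}_W(\mathbb C)$, with the forgetful functor $(C,m)\mapsto C$. *)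

theory Defs
  imports Main
begin

record ('o,'m) cat =
  Obj  :: "'o set"
  Arr  :: "'m set"
  Dom  :: "'m \<Rightarrow> 'o"
  Cod  :: "'m \<Rightarrow> 'o"
  Id   :: "'o \<Rightarrow> 'm"
  Comp :: "'m \<Rightarrow> 'm \<Rightarrow> 'm"   (* Comp C g f = g \<circ> f *)

definition hom :: "('o,'m) cat \<Rightarrow> 'o \<Rightarrow> 'o \<Rightarrow> 'm set" where
  "hom C a b = {f \<in> Arr C. Dom C f = a \<and> Cod C f = b}"

definition category :: "('o,'m) cat \<Rightarrow> bool" where
  "category C \<longleftrightarrow>
     (\<forall>f\<in>Arr C. Dom C f \<in> Obj C \<and> Cod C f \<in> Obj C) \<and>
     (\<forall>a\<in>Obj C. Id C a \<in> hom C a a) \<and>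
     (\<forall>f\<in>Arr C. \<forall>g\<in>Arr C. Cod C f = Dom C g \<longrightarrow>
         Comp C g f \<in> hom C (Dom C f) (Cod C g)) \<and>
     (\<forall>f\<in>Arr C. Comp C (Id C (Cod C f)) f = f \<and> Comp C f (Id C (Dom C f)) = f) \<and>
     (\<forall>f\<in>Arr C. \<forall>g\<in>Arr C. \<forall>h\<in>Arr C. Cod C f = Dom C g \<longrightarrow> Cod C g = Dom C h \<longrightarrow>
         Comp C h (Comp C g f) = Comp C (Comp C h g) f)"

definition is_zero_obj :: "('o,'m) cat \<Rightarrow> 'o \<Rightarrow> bool" where
  "is_zero_obj C z \<longleftrightarrow> z \<in> Obj C \<and>
     (\<forall>a\<in>Obj C. (\<exists>!f. f \<in> hom C a z) \<and> (\<exists>!f. f \<in> hom C z a))"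

definition pointed :: "('o,'m) cat \<Rightarrow> bool" where
  "pointed C \<longleftrightarrow> (\<exists>z. is_zero_obj C z)"

definition zero_map :: "('o,'m) cat \<Rightarrow> 'o \<Rightarrow> 'o \<Rightarrow> 'm" where
  "zero_map C a b = (SOME f. f \<in> hom C a b \<and>
      (\<exists>z g k. is_zero_obj C z \<and> g \<in> hom C a z \<and> k \<in> hom C z b \<and> f = Comp C k g))"

definition is_terminal :: "('o,'m) cat \<Rightarrow> 'o \<Rightarrow> bool" where
  "is_terminal C t \<longleftrightarrow> t \<in> Obj C \<and> (\<forall>a\<in>Obj C. \<exists>!f. f \<in> hom C a t)"

definition is_initial :: "('o,'m) cat \<Rightarrow> 'o \<Rightarrow> bool" where
  "is_initial C t \<longleftrightarrow> t \<in> Obj C \<and> (\<forall>a\<in>Obj C. \<exists>!f. f \<in> hom C t a)"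

definition is_pullback :: "('o,'m) cat \<Rightarrow> 'm \<Rightarrow> 'm \<Rightarrow> 'o \<times> 'm \<times> 'm \<Rightarrow> bool" where
  "is_pullback C f g r \<longleftrightarrow> (case r of (p, p1, p2) \<Rightarrow>
     f \<in> Arr C \<and> g \<in> Arr C \<and> Cod C f = Cod C g \<and> p \<in> Obj C \<and>
     p1 \<in> hom C p (Dom C f) \<and> p2 \<in> hom C p (Dom C g) \<and>
     Comp C f p1 = Comp C g p2 \<and>
     (\<forall>q u v. u \<in> hom C q (Dom C f) \<longrightarrow> v \<in> hom C q (Dom C g) \<longrightarrow>
        Comp C f u = Comp C g v \<longrightarrow>
        (\<exists>!t. t \<in> hom C q p \<and> Comp C p1 t = u \<and> Comp C p2 t = v)))"

definition is_pushout :: "('o,'m) cat \<Rightarrow> 'm \<Rightarrow> 'm \<Rightarrow> 'o \<times> 'm \<times> 'm \<Rightarrow> bool" where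
  "is_pushout C f g r \<longleftrightarrow> (case r of (p, q1, q2) \<Rightarrow>
     f \<in> Arr C \<and> g \<in> Arr C \<and> Dom C f = Dom C g \<and> p \<in> Obj C \<and>
     q1 \<in> hom C (Cod C f) p \<and> q2 \<in> hom C (Cod C g) p \<and>
     Comp C q1 f = Comp C q2 g \<and>
     (\<forall>q u v. u \<in> hom C (Cod C f) q \<longrightarrow> v \<in> hom C (Cod C g) q \<longrightarrow>
        Comp C u f = Comp C v g \<longrightarrow>
        (\<exists>!t. t \<in> hom C p q \<and> Comp C t q1 = u \<and> Comp C t q2 = v)))"

text \<open>Finite limits = terminal object + pullbacks; finite colimits dually.\<close>
definition has_finite_limits :: "('o,'m) cat \<Rightarrow> bool" where
  "has_finite_limits C \<longleftrightarrow> (\<exists>t. is_terminal C t) \<and>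
     (\<forall>f\<in>Arr C. \<forall>g\<in>Arr C. Cod C f = Cod C g \<longrightarrow> (\<exists>r. is_pullback C f g r))"

definition has_finite_colimits :: "('o,'m) cat \<Rightarrow> bool" where
  "has_finite_colimits C \<longleftrightarrow> (\<exists>t. is_initial C t) \<and>
     (\<forall>f\<in>Arr C. \<forall>g\<in>Arr C. Dom C f = Dom C g \<longrightarrow> (\<exists>r. is_pushout C f g r))"

definition is_coproduct :: "('o,'m) cat \<Rightarrow> 'o \<Rightarrow> 'o \<Rightarrow> 'o \<times> 'm \<times> 'm \<Rightarrow> bool" where
  "is_coproduct C a b r \<longleftrightarrow> (case r of (p, i1, i2) \<Rightarrow>
     p \<in> Obj C \<and> i1 \<in> hom C a p \<and> i2 \<in> hom C b p \<and>
     (\<forall>c f g. f \<in> hom C a c \<longrightarrow> g \<in> hom C b c \<longrightarrow>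
        (\<exists>!u. u \<in> hom C p c \<and> Comp C u i1 = f \<and> Comp C u i2 = g)))"

definition is_coproduct3 :: "('o,'m) cat \<Rightarrow> 'o \<Rightarrow> 'o \<Rightarrow> 'o \<Rightarrow> 'o \<times> 'm \<times> 'm \<times> 'm \<Rightarrow> bool" where
  "is_coproduct3 C a b d r \<longleftrightarrow> (case r of (p, i1, i2, i3) \<Rightarrow>
     p \<in> Obj C \<and> i1 \<in> hom C a p \<and> i2 \<in> hom C b p \<and> i3 \<in> hom C d p \<and>
     (\<forall>c f g k. f \<in> hom C a c \<longrightarrow> g \<in> hom C b c \<longrightarrow> k \<in> hom C d c \<longrightarrow>
        (\<exists>!u. u \<in> hom C p c \<and> Comp C u i1 = f \<and> Comp C u i2 = g \<and> Comp C u i3 = k)))"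

definition cop :: "('o,'m) cat \<Rightarrow> 'o \<Rightarrow> 'o \<Rightarrow> 'o \<times> 'm \<times> 'm" where
  "cop C a b = (SOME r. is_coproduct C a b r)"

definition copObj :: "('o,'m) cat \<Rightarrow> 'o \<Rightarrow> 'o \<Rightarrow> 'o" where
  "copObj C a b = fst (cop C a b)"
definition inj1 :: "('o,'m) cat \<Rightarrow> 'o \<Rightarrow> 'o \<Rightarrow> 'm" where
  "inj1 C a b = fst (snd (cop C a b))"
definition inj2 :: "('o,'m) cat \<Rightarrow> 'o \<Rightarrow> 'o \<Rightarrow> 'm" where
  "inj2 C a b = snd (snd (cop C a b))"

definition copair :: "('o,'m) cat \<Rightarrow> 'm \<Rightarrow> 'm \<Rightarrow> 'm" where
  "copair C f g = (THE u. u \<in> hom C (copObj C (Dom C f) (Dom C g)) (Cod C f) \<and>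
      Comp C u (inj1 C (Dom C f) (Dom C g)) = f \<and> Comp C u (inj2 C (Dom C f) (Dom C g)) = g)"

definition copmap :: "('o,'m) cat \<Rightarrow> 'm \<Rightarrow> 'm \<Rightarrow> 'm" where
  "copmap C h f = copair C (Comp C (inj1 C (Cod C h) (Cod C f)) h)
                           (Comp C (inj2 C (Cod C h) (Cod C f)) f)"

definition codiag :: "('o,'m) cat \<Rightarrow> 'o \<Rightarrow> 'o \<Rightarrow> 'm" where
  "codiag C W X = copair C (Id C W) (zero_map C X W)"

definition pb :: "('o,'m) cat \<Rightarrow> 'm \<Rightarrow> 'm \<Rightarrow> 'o \<times> 'm \<times> 'm" where
  "pb C f g = (SOME r. is_pullback C f g r)"

text \<open>(W+X) \<times>_W (W+Y) and its two projections.\<close>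
definition PB :: "('o,'m) cat \<Rightarrow> 'o \<Rightarrow> 'o \<Rightarrow> 'o \<Rightarrow> 'o" where
  "PB C W X Y = fst (pb C (codiag C W X) (codiag C W Y))"
definition pr1 :: "('o,'m) cat \<Rightarrow> 'o \<Rightarrow> 'o \<Rightarrow> 'o \<Rightarrow> 'm" where
  "pr1 C W X Y = fst (snd (pb C (codiag C W X) (codiag C W Y)))"
definition pr2 :: "('o,'m) cat \<Rightarrow> 'o \<Rightarrow> 'o \<Rightarrow> 'o \<Rightarrow> 'm" where
  "pr2 C W X Y = snd (snd (pb C (codiag C W X) (codiag C W Y)))"

definition pbpair :: "('o,'m) cat \<Rightarrow> 'o \<Rightarrow> 'o \<Rightarrow> 'o \<Rightarrow> 'm \<Rightarrow> 'm \<Rightarrow> 'm" where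
  "pbpair C W X Y u v = (THE t. t \<in> hom C (Dom C u) (PB C W X Y) \<and>
      Comp C (pr1 C W X Y) t = u \<and> Comp C (pr2 C W X Y) t = v)"

record ('o,'m) wcs =
  apex :: 'o
  lobj :: 'o
  lmap :: 'm
  robj :: 'o
  rmap :: 'm
  wobj :: 'o
  wmap :: 'm

record 'm wcsmor =
  ma :: 'm
  mf :: 'm
  mg :: 'm
  mh :: 'm

definition wcospan :: "('o,'m) cat \<Rightarrow> ('o,'m) wcs \<Rightarrow> bool" where
  "wcospan C c \<longleftrightarrow> apex c \<in> Obj C \<and> lmap c \<in> hom C (lobj c) (apex c) \<and>
     rmap c \<in> hom C (robj c) (apex c) \<and> wmap c \<in> hom C (wobj c) (apex c)"

definition cs_mor :: "('o,'m) cat \<Rightarrow> ('o,'m) wcs \<Rightarrow> ('o,'m) wcs \<Rightarrow> 'm wcsmor \<Rightarrow> bool" where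
  "cs_mor C c c' \<phi> \<longleftrightarrow> wcospan C c \<and> wcospan C c' \<and>
     ma \<phi> \<in> hom C (apex c) (apex c') \<and> mf \<phi> \<in> hom C (lobj c) (lobj c') \<and>
     mg \<phi> \<in> hom C (robj c) (robj c') \<and> mh \<phi> \<in> hom C (wobj c) (wobj c') \<and>
     Comp C (lmap c') (mf \<phi>) = Comp C (ma \<phi>) (lmap c) \<and>
     Comp C (rmap c') (mg \<phi>) = Comp C (ma \<phi>) (rmap c) \<and>
     Comp C (wmap c') (mh \<phi>) = Comp C (ma \<phi>) (wmap c)"

definition cs_comp :: "('o,'m) cat \<Rightarrow> 'm wcsmor \<Rightarrow> 'm wcsmor \<Rightarrow> 'm wcsmor" where
  "cs_comp C \<psi> \<phi> = \<lparr>ma = Comp C (ma \<psi>) (ma \<phi>), mf = Comp C (mf \<psi>) (mf \<phi>),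
                      mg = Comp C (mg \<psi>) (mg \<phi>), mh = Comp C (mh \<psi>) (mh \<phi>)\<rparr>"

definition internal_mult :: "('o,'m) cat \<Rightarrow> ('o,'m) wcs \<Rightarrow> 'm \<Rightarrow> bool" where
  "internal_mult C c m \<longleftrightarrow>
     (let W = wobj c; X = lobj c; Y = robj c in
       m \<in> hom C (PB C W X Y) (apex c) \<and>
       Comp C m (pbpair C W X Y (Id C (copObj C W X))
                   (Comp C (inj1 C W Y) (codiag C W X))) = copair C (wmap c) (lmap c) \<and>
       Comp C m (pbpair C W X Y (Comp C (inj1 C W X) (codiag C W Y))
                   (Id C (copObj C W Y))) = copair C (wmap c) (rmap c))"

definition mcs :: "('o,'m) cat \<Rightarrow> ('o,'m) wcs \<Rightarrow> 'm \<Rightarrow> bool" where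
  "mcs C c m \<longleftrightarrow> wcospan C c \<and> internal_mult C c m"

definition pbmap :: "('o,'m) cat \<Rightarrow> ('o,'m) wcs \<Rightarrow> ('o,'m) wcs \<Rightarrow> 'm wcsmor \<Rightarrow> 'm" where
  "pbmap C c c' \<phi> = pbpair C (wobj c') (lobj c') (robj c')
      (Comp C (copmap C (mh \<phi>) (mf \<phi>)) (pr1 C (wobj c) (lobj c) (robj c)))
      (Comp C (copmap C (mh \<phi>) (mg \<phi>)) (pr2 C (wobj c) (lobj c) (robj c)))"

definition mcs_mor :: "('o,'m) cat \<Rightarrow> ('o,'m) wcs \<Rightarrow> 'm \<Rightarrow> ('o,'m) wcs \<Rightarrow> 'm \<Rightarrow> 'm wcsmor \<Rightarrow> bool" where
  "mcs_mor C c m c' m' \<phi> \<longleftrightarrow> mcs C c m \<and> mcs C c' m' \<and> cs_mor C c c' \<phi> \<and>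
     Comp C (ma \<phi>) m = Comp C m' (pbmap C c c' \<phi>)"

end

theory Submission
  imports Defs
begin

text \<open>A map out of the pushout is a pair \<open>(u, k)\<close> with \<open>u : A \<rightarrow> B\<close>,
  \<open>k : (W+X)\<times>\<^sub>W(W+Y) \<rightarrow> B\<close> and \<open>u[w,x,y] = k v\<close>. On the summands \<open>W, X\<close> the map \<open>v\<close> is the
  unit \<open>\<langle>1, \<iota>\<^sub>1[1,0]\<rangle>\<close> and on \<open>W, Y\<close> it is \<open>\<langle>\<iota>\<^sub>1[1,0], 1\<rangle>\<close>, so the condition says exactly that
  \<open>k\<close> restricted along the two units is \<open>u[w,x]\<close> and \<open>u[w,y]\<close>. For \<open>(\<nu>, \<mu>)\<close> this makes \<open>\<mu>\<close>
  an internal multiplication. Given a morphism \<open>(a,f,g,h)\<close> into a multiplicative cospan \<open>(C',m')\<close>,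
  the pair \<open>(a, m'((h+f)\<times>\<^sub>h(h+g)))\<close> satisfies the condition because \<open>(h+f)\<times>\<^sub>h(h+g)\<close> commutes
  with the units, and its unique factorisation through the pushout is the unique extension.\<close>

lemma ex1_unique: "\<exists>!x. P x \<Longrightarrow> P a \<Longrightarrow> P b \<Longrightarrow> a = b"
  by blast

locale elementary_category =
  fixes C :: "('o,'m) cat"
  assumes category: "category C"
begin

abbreviation comp (infixr "\<cdot>" 80) where "g \<cdot> f \<equiv> Comp C g f"

lemma homD: "f \<in> hom C a b \<Longrightarrow> f \<in> Arr C \<and> Dom C f = a \<and> Cod C f = b"
  by (simp add: hom_def)

lemma category_laws:
  "\<forall>f\<in>Arr C. Dom C f \<in> Obj C \<and> Cod C f \<in> Obj C"
  "\<forall>a\<in>Obj C. Id C a \<in> hom C a a"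
  "\<forall>f\<in>Arr C. \<forall>g\<in>Arr C. Cod C f = Dom C g \<longrightarrow> g \<cdot> f \<in> hom C (Dom C f) (Cod C g)"
  "\<forall>f\<in>Arr C. Id C (Cod C f) \<cdot> f = f \<and> f \<cdot> Id C (Dom C f) = f"
  "\<forall>f\<in>Arr C. \<forall>g\<in>Arr C. \<forall>h\<in>Arr C. Cod C f = Dom C g \<longrightarrow> Cod C g = Dom C h \<longrightarrow>
     h \<cdot> (g \<cdot> f) = (h \<cdot> g) \<cdot> f"
  using category unfolding category_def by blast+

lemma hom_objs: "f \<in> hom C a b \<Longrightarrow> a \<in> Obj C \<and> b \<in> Obj C"
  using category_laws(1) homD by metis

lemma comp_hom: "f \<in> hom C a b \<Longrightarrow> g \<in> hom C b c \<Longrightarrow> g \<cdot> f \<in> hom C a c"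
  using category_laws(3) homD by metis

lemma id_hom: "a \<in> Obj C \<Longrightarrow> Id C a \<in> hom C a a"
  using category_laws(2) by blast

lemma id_comp: "f \<in> hom C a b \<Longrightarrow> Id C b \<cdot> f = f"
  using category_laws(4) homD by metis

lemma comp_id: "f \<in> hom C a b \<Longrightarrow> f \<cdot> Id C a = f"
  using category_laws(4) homD by metis

lemma comp_assoc:
  "f \<in> hom C a b \<Longrightarrow> g \<in> hom C b c \<Longrightarrow> k \<in> hom C c d \<Longrightarrow> (k \<cdot> g) \<cdot> f = k \<cdot> (g \<cdot> f)"
  using category_laws(5) homD by metis

lemma comp_eq_whisker:
  assumes "b \<in> hom C x y" "a \<in> hom C y z" "b' \<in> hom C x y'" "a' \<in> hom C y' z"
    and "k \<in> hom C z w" and "a \<cdot> b = a' \<cdot> b'"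
  shows "(k \<cdot> a) \<cdot> b = (k \<cdot> a') \<cdot> b'"
  using comp_assoc[OF assms(1,2,5)] comp_assoc[OF assms(3,4,5)] assms(6) by simp

end

locale finitely_cocomplete_category = elementary_category +
  assumes finite_colimits: "has_finite_colimits C"
begin

text \<open>A coproduct of \<open>a\<close> and \<open>b\<close> is a pushout of the two maps out of the initial object.\<close>

lemma coproduct_exists:
  assumes "a \<in> Obj C" "b \<in> Obj C"
  shows "\<exists>r. is_coproduct C a b r"
proof -
  obtain i where i: "is_initial C i"
    using finite_colimits unfolding has_finite_colimits_def by blast
  obtain ia ib where ia: "ia \<in> hom C i a" and ib: "ib \<in> hom C i b"
    using i assms unfolding is_initial_def by blast
  then obtain p q1 q2 where po: "is_pushout C ia ib (p, q1, q2)"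
    using finite_colimits homD unfolding has_finite_colimits_def by (metis prod_cases3)
  have "is_coproduct C a b (p, q1, q2)"
    unfolding is_coproduct_def prod.case
  proof (intro conjI allI impI)
    show "p \<in> Obj C" "q1 \<in> hom C a p" "q2 \<in> hom C b p"
      using po ia ib homD unfolding is_pushout_def by auto
  next
    fix c f g assume f: "f \<in> hom C a c" and g: "g \<in> hom C b c"
    have "f \<cdot> ia = g \<cdot> ib"
      using i comp_hom[OF ia f] comp_hom[OF ib g] hom_objs[OF f] unfolding is_initial_def by blast
    then show "\<exists>!u. u \<in> hom C p c \<and> u \<cdot> q1 = f \<and> u \<cdot> q2 = g"
      using po f g ia ib homD unfolding is_pushout_def prod.case by metis
  qed
  then show ?thesis by blast
qed

lemma cop_is_coproduct:
  assumes "a \<in> Obj C" "b \<in> Obj C"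
  shows "is_coproduct C a b (copObj C a b, inj1 C a b, inj2 C a b)"
  using someI_ex[OF coproduct_exists[OF assms]]
  unfolding copObj_def inj1_def inj2_def cop_def by simp

lemma
  assumes "a \<in> Obj C" "b \<in> Obj C"
  shows copObj_obj: "copObj C a b \<in> Obj C"
    and inj1_hom: "inj1 C a b \<in> hom C a (copObj C a b)"
    and inj2_hom: "inj2 C a b \<in> hom C b (copObj C a b)"
    and cop_universal: "\<And>f g c. f \<in> hom C a c \<Longrightarrow> g \<in> hom C b c \<Longrightarrow>
      \<exists>!u. u \<in> hom C (copObj C a b) c \<and> u \<cdot> inj1 C a b = f \<and> u \<cdot> inj2 C a b = g"
proof -
  note cop = cop_is_coproduct[OF assms, unfolded is_coproduct_def prod.case]
  show "copObj C a b \<in> Obj C" "inj1 C a b \<in> hom C a (copObj C a b)"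
    "inj2 C a b \<in> hom C b (copObj C a b)"
    using cop by simp_all
  show "\<And>f g c. f \<in> hom C a c \<Longrightarrow> g \<in> hom C b c \<Longrightarrow>
      \<exists>!u. u \<in> hom C (copObj C a b) c \<and> u \<cdot> inj1 C a b = f \<and> u \<cdot> inj2 C a b = g"
    using cop[THEN conjunct2, THEN conjunct2, THEN conjunct2] by blast
qed

lemma cop_ext:
  assumes ab: "a \<in> Obj C" "b \<in> Obj C"
    and u: "u \<in> hom C (copObj C a b) c" and u': "u' \<in> hom C (copObj C a b) c"
    and "u \<cdot> inj1 C a b = u' \<cdot> inj1 C a b" "u \<cdot> inj2 C a b = u' \<cdot> inj2 C a b"
  shows "u = u'"
proof -
  have "u \<cdot> inj1 C a b \<in> hom C a c" "u \<cdot> inj2 C a b \<in> hom C b c"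
    using comp_hom[OF inj1_hom[OF ab] u] comp_hom[OF inj2_hom[OF ab] u] .
  from cop_universal[OF ab this] show ?thesis
    by (rule ex1_unique) (use u u' assms(5,6) in simp_all)
qed

lemma
  assumes f: "f \<in> hom C a c" and g: "g \<in> hom C b c"
  shows copair_hom: "copair C f g \<in> hom C (copObj C a b) c"
    and copair_inj1: "copair C f g \<cdot> inj1 C a b = f"
    and copair_inj2: "copair C f g \<cdot> inj2 C a b = g"
proof -
  have ab: "a \<in> Obj C" "b \<in> Obj C" using f g hom_objs by blast+
  have "Dom C f = a" "Dom C g = b" "Cod C f = c" using f g homD by blast+
  then have "copair C f g = (THE u. u \<in> hom C (copObj C a b) c \<and> u \<cdot> inj1 C a b = f \<and> u \<cdot> inj2 C a b = g)"
    unfolding copair_def by simp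
  with theI'[OF cop_universal[OF ab f g]] show "copair C f g \<in> hom C (copObj C a b) c"
    "copair C f g \<cdot> inj1 C a b = f" "copair C f g \<cdot> inj2 C a b = g" by simp_all
qed

lemma comp_copair:
  assumes f: "f \<in> hom C a c" and g: "g \<in> hom C b c" and u: "u \<in> hom C c d"
  shows "u \<cdot> copair C f g = copair C (u \<cdot> f) (u \<cdot> g)"
proof (rule cop_ext)
  show ab: "a \<in> Obj C" "b \<in> Obj C" using f g hom_objs by blast+
  note uf = comp_hom[OF f u] and ug = comp_hom[OF g u]
  show "u \<cdot> copair C f g \<in> hom C (copObj C a b) d" using comp_hom[OF copair_hom[OF f g] u] .
  show "copair C (u \<cdot> f) (u \<cdot> g) \<in> hom C (copObj C a b) d" using copair_hom[OF uf ug] .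
  show "(u \<cdot> copair C f g) \<cdot> inj1 C a b = copair C (u \<cdot> f) (u \<cdot> g) \<cdot> inj1 C a b"
    using comp_assoc[OF inj1_hom[OF ab] copair_hom[OF f g] u] copair_inj1[OF f g] copair_inj1[OF uf ug]
    by simp
  show "(u \<cdot> copair C f g) \<cdot> inj2 C a b = copair C (u \<cdot> f) (u \<cdot> g) \<cdot> inj2 C a b"
    using comp_assoc[OF inj2_hom[OF ab] copair_hom[OF f g] u] copair_inj2[OF f g] copair_inj2[OF uf ug]
    by simp
qed

lemma
  assumes h: "h \<in> hom C W W'" and f: "f \<in> hom C X X'"
  shows copmap_hom: "copmap C h f \<in> hom C (copObj C W X) (copObj C W' X')"
    and copmap_inj1: "copmap C h f \<cdot> inj1 C W X = inj1 C W' X' \<cdot> h"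
    and copmap_inj2: "copmap C h f \<cdot> inj2 C W X = inj2 C W' X' \<cdot> f"
proof -
  have o: "W' \<in> Obj C" "X' \<in> Obj C" using h f hom_objs by blast+
  have "Cod C h = W'" "Cod C f = X'" using h f homD by blast+
  then have "copmap C h f = copair C (inj1 C W' X' \<cdot> h) (inj2 C W' X' \<cdot> f)"
    unfolding copmap_def by simp
  moreover have "inj1 C W' X' \<cdot> h \<in> hom C W (copObj C W' X')"
    and "inj2 C W' X' \<cdot> f \<in> hom C X (copObj C W' X')"
    using comp_hom[OF h inj1_hom[OF o]] comp_hom[OF f inj2_hom[OF o]] .
  ultimately show "copmap C h f \<in> hom C (copObj C W X) (copObj C W' X')"
    "copmap C h f \<cdot> inj1 C W X = inj1 C W' X' \<cdot> h" "copmap C h f \<cdot> inj2 C W X = inj2 C W' X' \<cdot> f"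
    using copair_hom copair_inj1 copair_inj2 by simp_all
qed

lemma copair_comp_copmap:
  assumes f': "f' \<in> hom C W' c" and g': "g' \<in> hom C X' c"
    and h: "h \<in> hom C W W'" and f: "f \<in> hom C X X'"
  shows "copair C f' g' \<cdot> copmap C h f = copair C (f' \<cdot> h) (g' \<cdot> f)"
proof (rule cop_ext)
  show o: "W \<in> Obj C" "X \<in> Obj C" using h f hom_objs by blast+
  have o': "W' \<in> Obj C" "X' \<in> Obj C" using h f hom_objs by blast+
  note cp = copair_hom[OF f' g'] and hf = copmap_hom[OF h f]
  note f'h = comp_hom[OF h f'] and g'f = comp_hom[OF f g']
  show "copair C f' g' \<cdot> copmap C h f \<in> hom C (copObj C W X) c" using comp_hom[OF hf cp] .
  show "copair C (f' \<cdot> h) (g' \<cdot> f) \<in> hom C (copObj C W X) c" using copair_hom[OF f'h g'f] .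
  have "(copair C f' g' \<cdot> copmap C h f) \<cdot> inj1 C W X = (copair C f' g' \<cdot> inj1 C W' X') \<cdot> h"
    using comp_assoc[OF inj1_hom[OF o] hf cp] comp_assoc[OF h inj1_hom[OF o'] cp] copmap_inj1[OF h f]
    by simp
  then show "(copair C f' g' \<cdot> copmap C h f) \<cdot> inj1 C W X = copair C (f' \<cdot> h) (g' \<cdot> f) \<cdot> inj1 C W X"
    using copair_inj1[OF f' g'] copair_inj1[OF f'h g'f] by simp
  have "(copair C f' g' \<cdot> copmap C h f) \<cdot> inj2 C W X = (copair C f' g' \<cdot> inj2 C W' X') \<cdot> f"
    using comp_assoc[OF inj2_hom[OF o] hf cp] comp_assoc[OF f inj2_hom[OF o'] cp] copmap_inj2[OF h f]
    by simp
  then show "(copair C f' g' \<cdot> copmap C h f) \<cdot> inj2 C W X = copair C (f' \<cdot> h) (g' \<cdot> f) \<cdot> inj2 C W X"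
    using copair_inj2[OF f' g'] copair_inj2[OF f'h g'f] by simp
qed

end

locale pointed_category = elementary_category +
  assumes pointed: "pointed C"
begin

lemma zero_map_through_zero:
  assumes z: "is_zero_obj C z" and g: "g \<in> hom C a z" and k: "k \<in> hom C z b"
  shows "zero_map C a b = k \<cdot> g"
proof -
  let ?P = "\<lambda>f. f \<in> hom C a b \<and>
    (\<exists>z g k. is_zero_obj C z \<and> g \<in> hom C a z \<and> k \<in> hom C z b \<and> f = k \<cdot> g)"
  have "?P (k \<cdot> g)" using z g k comp_hom by blast
  moreover have "f = k \<cdot> g" if "?P f" for f
  proof -
    obtain z' g' k' where z': "is_zero_obj C z'" and g': "g' \<in> hom C a z'" and k': "k' \<in> hom C z' b"
      and f: "f = k' \<cdot> g'" using \<open>?P f\<close> by blast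
    have "z' \<in> Obj C" using z' unfolding is_zero_obj_def by blast
    then obtain u where u: "u \<in> hom C z' z"
      using z unfolding is_zero_obj_def by metis
    have ab: "a \<in> Obj C" "b \<in> Obj C" using g k hom_objs by blast+
    have "u \<cdot> g' \<in> hom C a z" using comp_hom[OF g' u] .
    then have ug: "u \<cdot> g' = g" using z g ab unfolding is_zero_obj_def by blast
    have "k \<cdot> u \<in> hom C z' b" using comp_hom[OF u k] .
    then have ku: "k \<cdot> u = k'" using z' k' ab unfolding is_zero_obj_def by blast
    show ?thesis using comp_assoc[OF g' u k] f ug ku by simp
  qed
  ultimately show ?thesis unfolding zero_map_def by (rule some_equality)
qed

lemma zero_map_factors:
  assumes "a \<in> Obj C" "b \<in> Obj C"
  obtains z g k where "is_zero_obj C z" "g \<in> hom C a z" "k \<in> hom C z b" "zero_map C a b = k \<cdot> g"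
proof -
  obtain z where z: "is_zero_obj C z" using pointed unfolding pointed_def by blast
  moreover obtain g where "g \<in> hom C a z" using z assms unfolding is_zero_obj_def by blast
  moreover obtain k where "k \<in> hom C z b" using z assms unfolding is_zero_obj_def by blast
  ultimately show ?thesis using that zero_map_through_zero by blast
qed

lemma zero_map_hom:
  assumes "a \<in> Obj C" "b \<in> Obj C"
  shows "zero_map C a b \<in> hom C a b"
proof -
  obtain z g k where "g \<in> hom C a z" "k \<in> hom C z b" "zero_map C a b = k \<cdot> g"
    using zero_map_factors[OF assms] .
  then show ?thesis using comp_hom by simp
qed

lemma comp_zero_map:
  assumes f: "f \<in> hom C b c" and a: "a \<in> Obj C"
  shows "f \<cdot> zero_map C a b = zero_map C a c"
proof -
  obtain z g k where z: "is_zero_obj C z" and g: "g \<in> hom C a z" and k: "k \<in> hom C z b"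
    and "zero_map C a b = k \<cdot> g"
    using zero_map_factors[OF a] hom_objs[OF f] by blast
  then have "f \<cdot> zero_map C a b = (f \<cdot> k) \<cdot> g" using comp_assoc[OF g k f] by simp
  then show ?thesis using zero_map_through_zero[OF z g comp_hom[OF k f]] by simp
qed

lemma zero_map_comp:
  assumes f: "f \<in> hom C a b" and c: "c \<in> Obj C"
  shows "zero_map C b c \<cdot> f = zero_map C a c"
proof -
  obtain z g k where z: "is_zero_obj C z" and g: "g \<in> hom C b z" and k: "k \<in> hom C z c"
    and "zero_map C b c = k \<cdot> g"
    using zero_map_factors[OF _ c] hom_objs[OF f] by blast
  then have "zero_map C b c \<cdot> f = k \<cdot> (g \<cdot> f)" using comp_assoc[OF f g k] by simp
  then show ?thesis using zero_map_through_zero[OF z comp_hom[OF f g] k] by simp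
qed

end

locale pointed_finitely_bicomplete_category =
  finitely_cocomplete_category + pointed_category +
  assumes finite_limits: "has_finite_limits C"
begin

lemma
  assumes W: "W \<in> Obj C" and X: "X \<in> Obj C"
  shows codiag_hom: "codiag C W X \<in> hom C (copObj C W X) W"
    and codiag_inj1: "codiag C W X \<cdot> inj1 C W X = Id C W"
    and codiag_inj2: "codiag C W X \<cdot> inj2 C W X = zero_map C X W"
  unfolding codiag_def
  using copair_hom copair_inj1 copair_inj2 id_hom[OF W] zero_map_hom[OF X W] by blast+

lemma codiag_copmap:
  assumes h: "h \<in> hom C W W'" and f: "f \<in> hom C X X'"
  shows "codiag C W' X' \<cdot> copmap C h f = h \<cdot> codiag C W X"
proof -
  have W: "W \<in> Obj C" "W' \<in> Obj C" and X: "X \<in> Obj C" "X' \<in> Obj C"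
    using h f hom_objs by blast+
  have "codiag C W' X' \<cdot> copmap C h f = copair C (Id C W' \<cdot> h) (zero_map C X' W' \<cdot> f)"
    unfolding codiag_def
    using copair_comp_copmap[OF id_hom[OF W(2)] zero_map_hom[OF X(2) W(2)] h f] .
  also have "\<dots> = copair C (h \<cdot> Id C W) (h \<cdot> zero_map C X W)"
    using id_comp[OF h] comp_id[OF h] zero_map_comp[OF f W(2)] comp_zero_map[OF h X(1)] by simp
  also have "\<dots> = h \<cdot> codiag C W X"
    unfolding codiag_def using comp_copair[OF id_hom[OF W(1)] zero_map_hom[OF X(1) W(1)] h] by simp
  finally show ?thesis .
qed

lemma pb_is_pullback:
  assumes "W \<in> Obj C" "X \<in> Obj C" "Y \<in> Obj C"
  shows "is_pullback C (codiag C W X) (codiag C W Y) (PB C W X Y, pr1 C W X Y, pr2 C W X Y)"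
proof -
  have "codiag C W X \<in> Arr C" "codiag C W Y \<in> Arr C" "Cod C (codiag C W X) = Cod C (codiag C W Y)"
    using codiag_hom assms homD by metis+
  then have "\<exists>r. is_pullback C (codiag C W X) (codiag C W Y) r"
    using finite_limits unfolding has_finite_limits_def by blast
  then have "is_pullback C (codiag C W X) (codiag C W Y) (pb C (codiag C W X) (codiag C W Y))"
    unfolding pb_def by (rule someI_ex)
  then show ?thesis unfolding PB_def pr1_def pr2_def by simp
qed

lemma
  assumes o: "W \<in> Obj C" "X \<in> Obj C" "Y \<in> Obj C"
  shows pr1_hom: "pr1 C W X Y \<in> hom C (PB C W X Y) (copObj C W X)"
    and pr2_hom: "pr2 C W X Y \<in> hom C (PB C W X Y) (copObj C W Y)"
    and pb_commutes: "codiag C W X \<cdot> pr1 C W X Y = codiag C W Y \<cdot> pr2 C W X Y"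
    and pb_universal: "\<And>q u v. u \<in> hom C q (copObj C W X) \<Longrightarrow> v \<in> hom C q (copObj C W Y) \<Longrightarrow>
      codiag C W X \<cdot> u = codiag C W Y \<cdot> v \<Longrightarrow>
      \<exists>!t. t \<in> hom C q (PB C W X Y) \<and> pr1 C W X Y \<cdot> t = u \<and> pr2 C W X Y \<cdot> t = v"
proof -
  have "Dom C (codiag C W X) = copObj C W X" "Dom C (codiag C W Y) = copObj C W Y"
    using codiag_hom o homD by blast+
  note pb = pb_is_pullback[OF o, unfolded is_pullback_def prod.case this]
  show "pr1 C W X Y \<in> hom C (PB C W X Y) (copObj C W X)"
    "pr2 C W X Y \<in> hom C (PB C W X Y) (copObj C W Y)"
    "codiag C W X \<cdot> pr1 C W X Y = codiag C W Y \<cdot> pr2 C W X Y"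
    using pb by simp_all
  show "\<And>q u v. u \<in> hom C q (copObj C W X) \<Longrightarrow> v \<in> hom C q (copObj C W Y) \<Longrightarrow>
      codiag C W X \<cdot> u = codiag C W Y \<cdot> v \<Longrightarrow>
      \<exists>!t. t \<in> hom C q (PB C W X Y) \<and> pr1 C W X Y \<cdot> t = u \<and> pr2 C W X Y \<cdot> t = v"
    using pb[THEN conjunct2, THEN conjunct2, THEN conjunct2, THEN conjunct2, THEN conjunct2,
        THEN conjunct2, THEN conjunct2] by blast
qed

lemma
  assumes o: "W \<in> Obj C" "X \<in> Obj C" "Y \<in> Obj C"
    and u: "u \<in> hom C q (copObj C W X)" and v: "v \<in> hom C q (copObj C W Y)"
    and uv: "codiag C W X \<cdot> u = codiag C W Y \<cdot> v"
  shows pbpair_hom: "pbpair C W X Y u v \<in> hom C q (PB C W X Y)"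
    and pr1_pbpair: "pr1 C W X Y \<cdot> pbpair C W X Y u v = u"
    and pr2_pbpair: "pr2 C W X Y \<cdot> pbpair C W X Y u v = v"
proof -
  have "pbpair C W X Y u v =
      (THE t. t \<in> hom C q (PB C W X Y) \<and> pr1 C W X Y \<cdot> t = u \<and> pr2 C W X Y \<cdot> t = v)"
    using u homD unfolding pbpair_def by simp
  with theI'[OF pb_universal[OF o u v uv]]
  show "pbpair C W X Y u v \<in> hom C q (PB C W X Y)" "pr1 C W X Y \<cdot> pbpair C W X Y u v = u"
    "pr2 C W X Y \<cdot> pbpair C W X Y u v = v" by simp_all
qed

lemma pb_ext:
  assumes o: "W \<in> Obj C" "X \<in> Obj C" "Y \<in> Obj C"
    and t: "t \<in> hom C q (PB C W X Y)" and t': "t' \<in> hom C q (PB C W X Y)"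
    and "pr1 C W X Y \<cdot> t = pr1 C W X Y \<cdot> t'" and "pr2 C W X Y \<cdot> t = pr2 C W X Y \<cdot> t'"
  shows "t = t'"
proof -
  note p1 = pr1_hom[OF o] and p2 = pr2_hom[OF o]
  have "codiag C W X \<cdot> (pr1 C W X Y \<cdot> t) = codiag C W Y \<cdot> (pr2 C W X Y \<cdot> t)"
    using comp_assoc[OF t p1 codiag_hom[OF o(1,2)]] comp_assoc[OF t p2 codiag_hom[OF o(1,3)]]
      pb_commutes[OF o] by simp
  from pb_universal[OF o comp_hom[OF t p1] comp_hom[OF t p2] this] show ?thesis
    by (rule ex1_unique) (use t t' assms(6,7) in simp_all)
qed

abbreviation lunit where
  "lunit W X Y \<equiv> pbpair C W X Y (Id C (copObj C W X)) (inj1 C W Y \<cdot> codiag C W X)"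

abbreviation runit where
  "runit W X Y \<equiv> pbpair C W X Y (inj1 C W X \<cdot> codiag C W Y) (Id C (copObj C W Y))"

lemma
  assumes o: "W \<in> Obj C" "X \<in> Obj C" "Y \<in> Obj C"
  shows lunit_hom: "lunit W X Y \<in> hom C (copObj C W X) (PB C W X Y)"
    and pr1_lunit: "pr1 C W X Y \<cdot> lunit W X Y = Id C (copObj C W X)"
    and pr2_lunit: "pr2 C W X Y \<cdot> lunit W X Y = inj1 C W Y \<cdot> codiag C W X"
proof -
  note d = codiag_hom[OF o(1,2)] and i = inj1_hom[OF o(1,3)]
  have "codiag C W Y \<cdot> (inj1 C W Y \<cdot> codiag C W X) = codiag C W X \<cdot> Id C (copObj C W X)"
    using comp_assoc[OF d i codiag_hom[OF o(1,3)]] codiag_inj1[OF o(1,3)] id_comp[OF d] comp_id[OF d]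
    by simp
  from pbpair_hom[OF o id_hom[OF copObj_obj[OF o(1,2)]] comp_hom[OF d i] this[symmetric]]
    pr1_pbpair[OF o id_hom[OF copObj_obj[OF o(1,2)]] comp_hom[OF d i] this[symmetric]]
    pr2_pbpair[OF o id_hom[OF copObj_obj[OF o(1,2)]] comp_hom[OF d i] this[symmetric]]
  show "lunit W X Y \<in> hom C (copObj C W X) (PB C W X Y)"
    "pr1 C W X Y \<cdot> lunit W X Y = Id C (copObj C W X)"
    "pr2 C W X Y \<cdot> lunit W X Y = inj1 C W Y \<cdot> codiag C W X" .
qed

lemma
  assumes o: "W \<in> Obj C" "X \<in> Obj C" "Y \<in> Obj C"
  shows runit_hom: "runit W X Y \<in> hom C (copObj C W Y) (PB C W X Y)"
    and pr1_runit: "pr1 C W X Y \<cdot> runit W X Y = inj1 C W X \<cdot> codiag C W Y"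
    and pr2_runit: "pr2 C W X Y \<cdot> runit W X Y = Id C (copObj C W Y)"
proof -
  note d = codiag_hom[OF o(1,3)] and i = inj1_hom[OF o(1,2)]
  have "codiag C W X \<cdot> (inj1 C W X \<cdot> codiag C W Y) = codiag C W Y \<cdot> Id C (copObj C W Y)"
    using comp_assoc[OF d i codiag_hom[OF o(1,2)]] codiag_inj1[OF o(1,2)] id_comp[OF d] comp_id[OF d]
    by simp
  from pbpair_hom[OF o comp_hom[OF d i] id_hom[OF copObj_obj[OF o(1,3)]] this]
    pr1_pbpair[OF o comp_hom[OF d i] id_hom[OF copObj_obj[OF o(1,3)]] this]
    pr2_pbpair[OF o comp_hom[OF d i] id_hom[OF copObj_obj[OF o(1,3)]] this]
  show "runit W X Y \<in> hom C (copObj C W Y) (PB C W X Y)"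
    "pr1 C W X Y \<cdot> runit W X Y = inj1 C W X \<cdot> codiag C W Y"
    "pr2 C W X Y \<cdot> runit W X Y = Id C (copObj C W Y)" .
qed

lemma
  assumes o: "W \<in> Obj C" "X \<in> Obj C" "Y \<in> Obj C"
  shows pr1_lunit_inj1: "pr1 C W X Y \<cdot> (lunit W X Y \<cdot> inj1 C W X) = inj1 C W X"
    and pr2_lunit_inj1: "pr2 C W X Y \<cdot> (lunit W X Y \<cdot> inj1 C W X) = inj1 C W Y"
    and pr1_lunit_inj2: "pr1 C W X Y \<cdot> (lunit W X Y \<cdot> inj2 C W X) = inj2 C W X"
    and pr2_lunit_inj2: "pr2 C W X Y \<cdot> (lunit W X Y \<cdot> inj2 C W X) = zero_map C X (copObj C W Y)"
proof -
  note l = lunit_hom[OF o] and p1 = pr1_hom[OF o] and p2 = pr2_hom[OF o]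
  note i1 = inj1_hom[OF o(1,2)] and i2 = inj2_hom[OF o(1,2)] and j = inj1_hom[OF o(1,3)]
  note d = codiag_hom[OF o(1,2)]
  show "pr1 C W X Y \<cdot> (lunit W X Y \<cdot> inj1 C W X) = inj1 C W X"
    using comp_assoc[OF i1 l p1] pr1_lunit[OF o] id_comp[OF i1] by simp
  show "pr1 C W X Y \<cdot> (lunit W X Y \<cdot> inj2 C W X) = inj2 C W X"
    using comp_assoc[OF i2 l p1] pr1_lunit[OF o] id_comp[OF i2] by simp
  have "pr2 C W X Y \<cdot> (lunit W X Y \<cdot> inj1 C W X) = inj1 C W Y \<cdot> (codiag C W X \<cdot> inj1 C W X)"
    using comp_assoc[OF i1 l p2] pr2_lunit[OF o] comp_assoc[OF i1 d j] by simp
  then show "pr2 C W X Y \<cdot> (lunit W X Y \<cdot> inj1 C W X) = inj1 C W Y"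
    using codiag_inj1[OF o(1,2)] comp_id[OF j] by simp
  have "pr2 C W X Y \<cdot> (lunit W X Y \<cdot> inj2 C W X) = inj1 C W Y \<cdot> (codiag C W X \<cdot> inj2 C W X)"
    using comp_assoc[OF i2 l p2] pr2_lunit[OF o] comp_assoc[OF i2 d j] by simp
  then show "pr2 C W X Y \<cdot> (lunit W X Y \<cdot> inj2 C W X) = zero_map C X (copObj C W Y)"
    using codiag_inj2[OF o(1,2)] comp_zero_map[OF j o(2)] by simp
qed

lemma
  assumes o: "W \<in> Obj C" "X \<in> Obj C" "Y \<in> Obj C"
  shows pr1_runit_inj1: "pr1 C W X Y \<cdot> (runit W X Y \<cdot> inj1 C W Y) = inj1 C W X"
    and pr2_runit_inj1: "pr2 C W X Y \<cdot> (runit W X Y \<cdot> inj1 C W Y) = inj1 C W Y"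
    and pr1_runit_inj2: "pr1 C W X Y \<cdot> (runit W X Y \<cdot> inj2 C W Y) = zero_map C Y (copObj C W X)"
    and pr2_runit_inj2: "pr2 C W X Y \<cdot> (runit W X Y \<cdot> inj2 C W Y) = inj2 C W Y"
proof -
  note r = runit_hom[OF o] and p1 = pr1_hom[OF o] and p2 = pr2_hom[OF o]
  note i1 = inj1_hom[OF o(1,3)] and i2 = inj2_hom[OF o(1,3)] and j = inj1_hom[OF o(1,2)]
  note d = codiag_hom[OF o(1,3)]
  show "pr2 C W X Y \<cdot> (runit W X Y \<cdot> inj1 C W Y) = inj1 C W Y"
    using comp_assoc[OF i1 r p2] pr2_runit[OF o] id_comp[OF i1] by simp
  show "pr2 C W X Y \<cdot> (runit W X Y \<cdot> inj2 C W Y) = inj2 C W Y"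
    using comp_assoc[OF i2 r p2] pr2_runit[OF o] id_comp[OF i2] by simp
  have "pr1 C W X Y \<cdot> (runit W X Y \<cdot> inj1 C W Y) = inj1 C W X \<cdot> (codiag C W Y \<cdot> inj1 C W Y)"
    using comp_assoc[OF i1 r p1] pr1_runit[OF o] comp_assoc[OF i1 d j] by simp
  then show "pr1 C W X Y \<cdot> (runit W X Y \<cdot> inj1 C W Y) = inj1 C W X"
    using codiag_inj1[OF o(1,3)] comp_id[OF j] by simp
  have "pr1 C W X Y \<cdot> (runit W X Y \<cdot> inj2 C W Y) = inj1 C W X \<cdot> (codiag C W Y \<cdot> inj2 C W Y)"
    using comp_assoc[OF i2 r p1] pr1_runit[OF o] comp_assoc[OF i2 d j] by simp
  then show "pr1 C W X Y \<cdot> (runit W X Y \<cdot> inj2 C W Y) = zero_map C Y (copObj C W X)"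
    using codiag_inj2[OF o(1,3)] comp_zero_map[OF j o(3)] by simp
qed

lemma internal_mult_iff:
  "internal_mult C c m \<longleftrightarrow>
     m \<in> hom C (PB C (wobj c) (lobj c) (robj c)) (apex c) \<and>
     m \<cdot> lunit (wobj c) (lobj c) (robj c) = copair C (wmap c) (lmap c) \<and>
     m \<cdot> runit (wobj c) (lobj c) (robj c) = copair C (wmap c) (rmap c)"
  unfolding internal_mult_def Let_def ..

lemma
  assumes \<phi>: "cs_mor C c c' \<phi>"
  shows pbmap_hom: "pbmap C c c' \<phi> \<in>
      hom C (PB C (wobj c) (lobj c) (robj c)) (PB C (wobj c') (lobj c') (robj c'))"
    and pr1_pbmap: "pr1 C (wobj c') (lobj c') (robj c') \<cdot> pbmap C c c' \<phi> =
      copmap C (mh \<phi>) (mf \<phi>) \<cdot> pr1 C (wobj c) (lobj c) (robj c)"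
    and pr2_pbmap: "pr2 C (wobj c') (lobj c') (robj c') \<cdot> pbmap C c c' \<phi> =
      copmap C (mh \<phi>) (mg \<phi>) \<cdot> pr2 C (wobj c) (lobj c) (robj c)"
proof -
  let ?W = "wobj c" and ?X = "lobj c" and ?Y = "robj c"
  let ?W' = "wobj c'" and ?X' = "lobj c'" and ?Y' = "robj c'"
  have h: "mh \<phi> \<in> hom C ?W ?W'" and f: "mf \<phi> \<in> hom C ?X ?X'" and g: "mg \<phi> \<in> hom C ?Y ?Y'"
    using \<phi> unfolding cs_mor_def by simp_all
  have o: "?W \<in> Obj C" "?X \<in> Obj C" "?Y \<in> Obj C" and o': "?W' \<in> Obj C" "?X' \<in> Obj C" "?Y' \<in> Obj C"
    using h f g hom_objs by blast+
  note p1 = pr1_hom[OF o] and p2 = pr2_hom[OF o]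
  note hf = copmap_hom[OF h f] and hg = copmap_hom[OF h g]
  have "codiag C ?W' ?X' \<cdot> (copmap C (mh \<phi>) (mf \<phi>) \<cdot> pr1 C ?W ?X ?Y)
      = mh \<phi> \<cdot> (codiag C ?W ?X \<cdot> pr1 C ?W ?X ?Y)"
    using comp_assoc[OF p1 hf codiag_hom[OF o'(1,2)]] codiag_copmap[OF h f]
      comp_assoc[OF p1 codiag_hom[OF o(1,2)] h] by simp
  also have "\<dots> = codiag C ?W' ?Y' \<cdot> (copmap C (mh \<phi>) (mg \<phi>) \<cdot> pr2 C ?W ?X ?Y)"
    using comp_assoc[OF p2 hg codiag_hom[OF o'(1,3)]] codiag_copmap[OF h g]
      comp_assoc[OF p2 codiag_hom[OF o(1,3)] h] pb_commutes[OF o] by simp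
  finally have compat: "codiag C ?W' ?X' \<cdot> (copmap C (mh \<phi>) (mf \<phi>) \<cdot> pr1 C ?W ?X ?Y)
      = codiag C ?W' ?Y' \<cdot> (copmap C (mh \<phi>) (mg \<phi>) \<cdot> pr2 C ?W ?X ?Y)" .
  note u = comp_hom[OF p1 hf] and v = comp_hom[OF p2 hg]
  show "pbmap C c c' \<phi> \<in> hom C (PB C ?W ?X ?Y) (PB C ?W' ?X' ?Y')"
    "pr1 C ?W' ?X' ?Y' \<cdot> pbmap C c c' \<phi> = copmap C (mh \<phi>) (mf \<phi>) \<cdot> pr1 C ?W ?X ?Y"
    "pr2 C ?W' ?X' ?Y' \<cdot> pbmap C c c' \<phi> = copmap C (mh \<phi>) (mg \<phi>) \<cdot> pr2 C ?W ?X ?Y"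
    unfolding pbmap_def
    using pbpair_hom[OF o' u v compat] pr1_pbpair[OF o' u v compat] pr2_pbpair[OF o' u v compat] .
qed

lemma pbmap_lunit:
  assumes \<phi>: "cs_mor C c c' \<phi>"
  shows "pbmap C c c' \<phi> \<cdot> lunit (wobj c) (lobj c) (robj c)
    = lunit (wobj c') (lobj c') (robj c') \<cdot> copmap C (mh \<phi>) (mf \<phi>)"
proof -
  let ?W = "wobj c" and ?X = "lobj c" and ?Y = "robj c"
  let ?W' = "wobj c'" and ?X' = "lobj c'" and ?Y' = "robj c'"
  let ?Q = "pbmap C c c' \<phi>" and ?hf = "copmap C (mh \<phi>) (mf \<phi>)" and ?hg = "copmap C (mh \<phi>) (mg \<phi>)"
  have h: "mh \<phi> \<in> hom C ?W ?W'" and f: "mf \<phi> \<in> hom C ?X ?X'" and g: "mg \<phi> \<in> hom C ?Y ?Y'"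
    using \<phi> unfolding cs_mor_def by simp_all
  have o: "?W \<in> Obj C" "?X \<in> Obj C" "?Y \<in> Obj C" and o': "?W' \<in> Obj C" "?X' \<in> Obj C" "?Y' \<in> Obj C"
    using h f g hom_objs by blast+
  note Q = pbmap_hom[OF \<phi>] and l = lunit_hom[OF o] and l' = lunit_hom[OF o']
  note hf = copmap_hom[OF h f] and hg = copmap_hom[OF h g]
  note p1 = pr1_hom[OF o] and p2 = pr2_hom[OF o] and p1' = pr1_hom[OF o'] and p2' = pr2_hom[OF o']
  note d = codiag_hom[OF o(1,2)] and d' = codiag_hom[OF o'(1,2)]
  note i = inj1_hom[OF o(1,3)] and i' = inj1_hom[OF o'(1,3)]
  show ?thesis
  proof (rule pb_ext[OF o' comp_hom[OF l Q] comp_hom[OF hf l']])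
    have "pr1 C ?W' ?X' ?Y' \<cdot> (?Q \<cdot> lunit ?W ?X ?Y) = ?hf \<cdot> (pr1 C ?W ?X ?Y \<cdot> lunit ?W ?X ?Y)"
      using comp_assoc[OF l Q p1'] pr1_pbmap[OF \<phi>] comp_assoc[OF l p1 hf] by simp
    also have "\<dots> = (pr1 C ?W' ?X' ?Y' \<cdot> lunit ?W' ?X' ?Y') \<cdot> ?hf"
      using pr1_lunit[OF o] pr1_lunit[OF o'] comp_id[OF hf] id_comp[OF hf] by simp
    finally show "pr1 C ?W' ?X' ?Y' \<cdot> (?Q \<cdot> lunit ?W ?X ?Y) = pr1 C ?W' ?X' ?Y' \<cdot> (lunit ?W' ?X' ?Y' \<cdot> ?hf)"
      using comp_assoc[OF hf l' p1'] by simp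
    have "pr2 C ?W' ?X' ?Y' \<cdot> (?Q \<cdot> lunit ?W ?X ?Y) = ?hg \<cdot> (inj1 C ?W ?Y \<cdot> codiag C ?W ?X)"
      using comp_assoc[OF l Q p2'] pr2_pbmap[OF \<phi>] comp_assoc[OF l p2 hg] pr2_lunit[OF o] by simp
    also have "\<dots> = inj1 C ?W' ?Y' \<cdot> (mh \<phi> \<cdot> codiag C ?W ?X)"
      using comp_assoc[OF d i hg] copmap_inj1[OF h g] comp_assoc[OF d h i'] by simp
    also have "\<dots> = (inj1 C ?W' ?Y' \<cdot> codiag C ?W' ?X') \<cdot> ?hf"
      using codiag_copmap[OF h f] comp_assoc[OF hf d' i'] by simp
    finally show "pr2 C ?W' ?X' ?Y' \<cdot> (?Q \<cdot> lunit ?W ?X ?Y) = pr2 C ?W' ?X' ?Y' \<cdot> (lunit ?W' ?X' ?Y' \<cdot> ?hf)"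
      using comp_assoc[OF hf l' p2'] pr2_lunit[OF o'] by simp
  qed
qed

lemma pbmap_runit:
  assumes \<phi>: "cs_mor C c c' \<phi>"
  shows "pbmap C c c' \<phi> \<cdot> runit (wobj c) (lobj c) (robj c)
    = runit (wobj c') (lobj c') (robj c') \<cdot> copmap C (mh \<phi>) (mg \<phi>)"
proof -
  let ?W = "wobj c" and ?X = "lobj c" and ?Y = "robj c"
  let ?W' = "wobj c'" and ?X' = "lobj c'" and ?Y' = "robj c'"
  let ?Q = "pbmap C c c' \<phi>" and ?hf = "copmap C (mh \<phi>) (mf \<phi>)" and ?hg = "copmap C (mh \<phi>) (mg \<phi>)"
  have h: "mh \<phi> \<in> hom C ?W ?W'" and f: "mf \<phi> \<in> hom C ?X ?X'" and g: "mg \<phi> \<in> hom C ?Y ?Y'"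
    using \<phi> unfolding cs_mor_def by simp_all
  have o: "?W \<in> Obj C" "?X \<in> Obj C" "?Y \<in> Obj C" and o': "?W' \<in> Obj C" "?X' \<in> Obj C" "?Y' \<in> Obj C"
    using h f g hom_objs by blast+
  note Q = pbmap_hom[OF \<phi>] and r = runit_hom[OF o] and r' = runit_hom[OF o']
  note hf = copmap_hom[OF h f] and hg = copmap_hom[OF h g]
  note p1 = pr1_hom[OF o] and p2 = pr2_hom[OF o] and p1' = pr1_hom[OF o'] and p2' = pr2_hom[OF o']
  note d = codiag_hom[OF o(1,3)] and d' = codiag_hom[OF o'(1,3)]
  note i = inj1_hom[OF o(1,2)] and i' = inj1_hom[OF o'(1,2)]
  show ?thesis
  proof (rule pb_ext[OF o' comp_hom[OF r Q] comp_hom[OF hg r']])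
    have "pr2 C ?W' ?X' ?Y' \<cdot> (?Q \<cdot> runit ?W ?X ?Y) = ?hg \<cdot> (pr2 C ?W ?X ?Y \<cdot> runit ?W ?X ?Y)"
      using comp_assoc[OF r Q p2'] pr2_pbmap[OF \<phi>] comp_assoc[OF r p2 hg] by simp
    also have "\<dots> = (pr2 C ?W' ?X' ?Y' \<cdot> runit ?W' ?X' ?Y') \<cdot> ?hg"
      using pr2_runit[OF o] pr2_runit[OF o'] comp_id[OF hg] id_comp[OF hg] by simp
    finally show "pr2 C ?W' ?X' ?Y' \<cdot> (?Q \<cdot> runit ?W ?X ?Y) = pr2 C ?W' ?X' ?Y' \<cdot> (runit ?W' ?X' ?Y' \<cdot> ?hg)"
      using comp_assoc[OF hg r' p2'] by simp
    have "pr1 C ?W' ?X' ?Y' \<cdot> (?Q \<cdot> runit ?W ?X ?Y) = ?hf \<cdot> (inj1 C ?W ?X \<cdot> codiag C ?W ?Y)"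
      using comp_assoc[OF r Q p1'] pr1_pbmap[OF \<phi>] comp_assoc[OF r p1 hf] pr1_runit[OF o] by simp
    also have "\<dots> = inj1 C ?W' ?X' \<cdot> (mh \<phi> \<cdot> codiag C ?W ?Y)"
      using comp_assoc[OF d i hf] copmap_inj1[OF h f] comp_assoc[OF d h i'] by simp
    also have "\<dots> = (inj1 C ?W' ?X' \<cdot> codiag C ?W' ?Y') \<cdot> ?hg"
      using codiag_copmap[OF h g] comp_assoc[OF hg d' i'] by simp
    finally show "pr1 C ?W' ?X' ?Y' \<cdot> (?Q \<cdot> runit ?W ?X ?Y) = pr1 C ?W' ?X' ?Y' \<cdot> (runit ?W' ?X' ?Y' \<cdot> ?hg)"
      using comp_assoc[OF hg r' p1'] pr1_runit[OF o'] by simp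
  qed
qed

lemma mult_pbmap_lunit:
  assumes m': "internal_mult C c' m'" and \<phi>: "cs_mor C c c' \<phi>"
  shows "(m' \<cdot> pbmap C c c' \<phi>) \<cdot> lunit (wobj c) (lobj c) (robj c) = ma \<phi> \<cdot> copair C (wmap c) (lmap c)"
proof -
  let ?W = "wobj c" and ?X = "lobj c" and ?Y = "robj c"
  let ?W' = "wobj c'" and ?X' = "lobj c'" and ?Y' = "robj c'"
  have h: "mh \<phi> \<in> hom C ?W ?W'" and f: "mf \<phi> \<in> hom C ?X ?X'" and g: "mg \<phi> \<in> hom C ?Y ?Y'"
    and a: "ma \<phi> \<in> hom C (apex c) (apex c')"
    and w: "wmap c \<in> hom C ?W (apex c)" and x: "lmap c \<in> hom C ?X (apex c)"
    and w': "wmap c' \<in> hom C ?W' (apex c')" and x': "lmap c' \<in> hom C ?X' (apex c')"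
    and hw: "wmap c' \<cdot> mh \<phi> = ma \<phi> \<cdot> wmap c" and fx: "lmap c' \<cdot> mf \<phi> = ma \<phi> \<cdot> lmap c"
    using \<phi> unfolding cs_mor_def wcospan_def by simp_all
  have o: "?W \<in> Obj C" "?X \<in> Obj C" "?Y \<in> Obj C" and o': "?W' \<in> Obj C" "?X' \<in> Obj C" "?Y' \<in> Obj C"
    using h f g hom_objs by blast+
  have m: "m' \<in> hom C (PB C ?W' ?X' ?Y') (apex c')"
    and m_lunit: "m' \<cdot> lunit ?W' ?X' ?Y' = copair C (wmap c') (lmap c')"
    using m' unfolding internal_mult_iff by simp_all
  note hf = copmap_hom[OF h f] and l = lunit_hom[OF o] and l' = lunit_hom[OF o']
  have "(m' \<cdot> pbmap C c c' \<phi>) \<cdot> lunit ?W ?X ?Y = m' \<cdot> (lunit ?W' ?X' ?Y' \<cdot> copmap C (mh \<phi>) (mf \<phi>))"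
    using comp_assoc[OF l pbmap_hom[OF \<phi>] m] pbmap_lunit[OF \<phi>] by simp
  also have "\<dots> = copair C (wmap c') (lmap c') \<cdot> copmap C (mh \<phi>) (mf \<phi>)"
    using comp_assoc[OF hf l' m] m_lunit by simp
  also have "\<dots> = copair C (ma \<phi> \<cdot> wmap c) (ma \<phi> \<cdot> lmap c)"
    using copair_comp_copmap[OF w' x' h f] hw fx by simp
  also have "\<dots> = ma \<phi> \<cdot> copair C (wmap c) (lmap c)"
    using comp_copair[OF w x a] by simp
  finally show ?thesis .
qed

lemma mult_pbmap_runit:
  assumes m': "internal_mult C c' m'" and \<phi>: "cs_mor C c c' \<phi>"
  shows "(m' \<cdot> pbmap C c c' \<phi>) \<cdot> runit (wobj c) (lobj c) (robj c) = ma \<phi> \<cdot> copair C (wmap c) (rmap c)"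
proof -
  let ?W = "wobj c" and ?X = "lobj c" and ?Y = "robj c"
  let ?W' = "wobj c'" and ?X' = "lobj c'" and ?Y' = "robj c'"
  have h: "mh \<phi> \<in> hom C ?W ?W'" and f: "mf \<phi> \<in> hom C ?X ?X'" and g: "mg \<phi> \<in> hom C ?Y ?Y'"
    and a: "ma \<phi> \<in> hom C (apex c) (apex c')"
    and w: "wmap c \<in> hom C ?W (apex c)" and y: "rmap c \<in> hom C ?Y (apex c)"
    and w': "wmap c' \<in> hom C ?W' (apex c')" and y': "rmap c' \<in> hom C ?Y' (apex c')"
    and hw: "wmap c' \<cdot> mh \<phi> = ma \<phi> \<cdot> wmap c" and gy: "rmap c' \<cdot> mg \<phi> = ma \<phi> \<cdot> rmap c"
    using \<phi> unfolding cs_mor_def wcospan_def by simp_all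
  have o: "?W \<in> Obj C" "?X \<in> Obj C" "?Y \<in> Obj C" and o': "?W' \<in> Obj C" "?X' \<in> Obj C" "?Y' \<in> Obj C"
    using h f g hom_objs by blast+
  have m: "m' \<in> hom C (PB C ?W' ?X' ?Y') (apex c')"
    and m_runit: "m' \<cdot> runit ?W' ?X' ?Y' = copair C (wmap c') (rmap c')"
    using m' unfolding internal_mult_iff by simp_all
  note hg = copmap_hom[OF h g] and r = runit_hom[OF o] and r' = runit_hom[OF o']
  have "(m' \<cdot> pbmap C c c' \<phi>) \<cdot> runit ?W ?X ?Y = m' \<cdot> (runit ?W' ?X' ?Y' \<cdot> copmap C (mh \<phi>) (mg \<phi>))"
    using comp_assoc[OF r pbmap_hom[OF \<phi>] m] pbmap_runit[OF \<phi>] by simp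
  also have "\<dots> = copair C (wmap c') (rmap c') \<cdot> copmap C (mh \<phi>) (mg \<phi>)"
    using comp_assoc[OF hg r' m] m_runit by simp
  also have "\<dots> = copair C (ma \<phi> \<cdot> wmap c) (ma \<phi> \<cdot> rmap c)"
    using copair_comp_copmap[OF w' y' h g] hw gy by simp
  also have "\<dots> = ma \<phi> \<cdot> copair C (wmap c) (rmap c)"
    using comp_copair[OF w y a] by simp
  finally show ?thesis .
qed

end

locale free_multiplication = pointed_finitely_bicomplete_category +
  fixes c T j1 j2 j3 s v Ct \<nu> \<mu>
  assumes wcospan: "wcospan C c"
    and coproduct3: "is_coproduct3 C (wobj c) (lobj c) (robj c) (T, j1, j2, j3)"
    and s_hom: "s \<in> hom C T (apex c)"
    and s_j1: "s \<cdot> j1 = wmap c" and s_j2: "s \<cdot> j2 = lmap c" and s_j3: "s \<cdot> j3 = rmap c"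
    and v_hom: "v \<in> hom C T (PB C (wobj c) (lobj c) (robj c))"
    and pr1_v_j1: "pr1 C (wobj c) (lobj c) (robj c) \<cdot> (v \<cdot> j1) = inj1 C (wobj c) (lobj c)"
    and pr1_v_j2: "pr1 C (wobj c) (lobj c) (robj c) \<cdot> (v \<cdot> j2) = inj2 C (wobj c) (lobj c)"
    and pr1_v_j3: "pr1 C (wobj c) (lobj c) (robj c) \<cdot> (v \<cdot> j3)
      = zero_map C (robj c) (copObj C (wobj c) (lobj c))"
    and pr2_v_j1: "pr2 C (wobj c) (lobj c) (robj c) \<cdot> (v \<cdot> j1) = inj1 C (wobj c) (robj c)"
    and pr2_v_j2: "pr2 C (wobj c) (lobj c) (robj c) \<cdot> (v \<cdot> j2)
      = zero_map C (lobj c) (copObj C (wobj c) (robj c))"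
    and pr2_v_j3: "pr2 C (wobj c) (lobj c) (robj c) \<cdot> (v \<cdot> j3) = inj2 C (wobj c) (robj c)"
    and pushout: "is_pushout C s v (Ct, \<nu>, \<mu>)"
begin

abbreviation "W \<equiv> wobj c"
abbreviation "X \<equiv> lobj c"
abbreviation "Y \<equiv> robj c"

lemma
  shows w_hom: "wmap c \<in> hom C W (apex c)" and x_hom: "lmap c \<in> hom C X (apex c)"
    and y_hom: "rmap c \<in> hom C Y (apex c)"
  using wcospan unfolding wcospan_def by simp_all

lemma objs: "W \<in> Obj C" "X \<in> Obj C" "Y \<in> Obj C"
  using w_hom x_hom y_hom hom_objs by blast+

lemma j_hom: "j1 \<in> hom C W T" "j2 \<in> hom C X T" "j3 \<in> hom C Y T"
  using coproduct3 unfolding is_coproduct3_def by simp_all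

lemma coproduct3_ext:
  assumes u: "u \<in> hom C T d" and u': "u' \<in> hom C T d"
    and "u \<cdot> j1 = u' \<cdot> j1" "u \<cdot> j2 = u' \<cdot> j2" "u \<cdot> j3 = u' \<cdot> j3"
  shows "u = u'"
proof -
  have "\<exists>!t. t \<in> hom C T d \<and> t \<cdot> j1 = u \<cdot> j1 \<and> t \<cdot> j2 = u \<cdot> j2 \<and> t \<cdot> j3 = u \<cdot> j3"
    using coproduct3 comp_hom[OF j_hom(1) u] comp_hom[OF j_hom(2) u] comp_hom[OF j_hom(3) u]
    unfolding is_coproduct3_def prod.case by blast
  then show ?thesis by (rule ex1_unique) (use u u' assms(3-5) in simp_all)
qed

lemma
  shows Ct_obj: "Ct \<in> Obj C"
    and \<nu>_hom: "\<nu> \<in> hom C (apex c) Ct"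
    and \<mu>_hom: "\<mu> \<in> hom C (PB C W X Y) Ct"
    and pushout_commutes: "\<nu> \<cdot> s = \<mu> \<cdot> v"
    and pushout_universal: "\<And>q u k. u \<in> hom C (apex c) q \<Longrightarrow> k \<in> hom C (PB C W X Y) q \<Longrightarrow>
      u \<cdot> s = k \<cdot> v \<Longrightarrow> \<exists>!t. t \<in> hom C Ct q \<and> t \<cdot> \<nu> = u \<and> t \<cdot> \<mu> = k"
proof -
  have "Cod C s = apex c" "Cod C v = PB C W X Y" using s_hom v_hom homD by blast+
  note po = pushout[unfolded is_pushout_def prod.case this]
  show "Ct \<in> Obj C" "\<nu> \<in> hom C (apex c) Ct" "\<mu> \<in> hom C (PB C W X Y) Ct" "\<nu> \<cdot> s = \<mu> \<cdot> v"
    using po by simp_all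
  show "\<And>q u k. u \<in> hom C (apex c) q \<Longrightarrow> k \<in> hom C (PB C W X Y) q \<Longrightarrow>
      u \<cdot> s = k \<cdot> v \<Longrightarrow> \<exists>!t. t \<in> hom C Ct q \<and> t \<cdot> \<nu> = u \<and> t \<cdot> \<mu> = k"
    using po[THEN conjunct2, THEN conjunct2, THEN conjunct2, THEN conjunct2, THEN conjunct2,
        THEN conjunct2, THEN conjunct2] by blast
qed

lemma
  shows v_j1_lunit: "v \<cdot> j1 = lunit W X Y \<cdot> inj1 C W X"
    and v_j1_runit: "v \<cdot> j1 = runit W X Y \<cdot> inj1 C W Y"
    and v_j2: "v \<cdot> j2 = lunit W X Y \<cdot> inj2 C W X"
    and v_j3: "v \<cdot> j3 = runit W X Y \<cdot> inj2 C W Y"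
proof -
  note o = objs and l = lunit_hom[OF objs] and r = runit_hom[OF objs]
  note vj = comp_hom[OF j_hom(1) v_hom] comp_hom[OF j_hom(2) v_hom] comp_hom[OF j_hom(3) v_hom]
  show "v \<cdot> j1 = lunit W X Y \<cdot> inj1 C W X"
    by (rule pb_ext[OF o vj(1) comp_hom[OF inj1_hom[OF o(1,2)] l]])
      (simp_all add: pr1_v_j1 pr2_v_j1 pr1_lunit_inj1[OF o] pr2_lunit_inj1[OF o])
  show "v \<cdot> j1 = runit W X Y \<cdot> inj1 C W Y"
    by (rule pb_ext[OF o vj(1) comp_hom[OF inj1_hom[OF o(1,3)] r]])
      (simp_all add: pr1_v_j1 pr2_v_j1 pr1_runit_inj1[OF o] pr2_runit_inj1[OF o])
  show "v \<cdot> j2 = lunit W X Y \<cdot> inj2 C W X"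
    by (rule pb_ext[OF o vj(2) comp_hom[OF inj2_hom[OF o(1,2)] l]])
      (simp_all add: pr1_v_j2 pr2_v_j2 pr1_lunit_inj2[OF o] pr2_lunit_inj2[OF o])
  show "v \<cdot> j3 = runit W X Y \<cdot> inj2 C W Y"
    by (rule pb_ext[OF o vj(3) comp_hom[OF inj2_hom[OF o(1,3)] r]])
      (simp_all add: pr1_v_j3 pr2_v_j3 pr1_runit_inj2[OF o] pr2_runit_inj2[OF o])
qed

lemma comp_v_iff:
  assumes k: "k \<in> hom C (PB C W X Y) B" and u: "u \<in> hom C (apex c) B"
  shows "k \<cdot> v = u \<cdot> s \<longleftrightarrow>
    k \<cdot> lunit W X Y = u \<cdot> copair C (wmap c) (lmap c) \<and>
    k \<cdot> runit W X Y = u \<cdot> copair C (wmap c) (rmap c)"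
proof -
  note o = objs and l = lunit_hom[OF objs] and r = runit_hom[OF objs] and j = j_hom
  note i1x = inj1_hom[OF o(1,2)] and i2x = inj2_hom[OF o(1,2)]
  note i1y = inj1_hom[OF o(1,3)] and i2y = inj2_hom[OF o(1,3)]
  note cx = copair_hom[OF w_hom x_hom] and cy = copair_hom[OF w_hom y_hom]
  have lunit_inj: "(k \<cdot> lunit W X Y) \<cdot> inj1 C W X = (k \<cdot> v) \<cdot> j1"
      "(k \<cdot> lunit W X Y) \<cdot> inj2 C W X = (k \<cdot> v) \<cdot> j2"
    using comp_eq_whisker[OF i1x l j(1) v_hom k v_j1_lunit[symmetric]]
      comp_eq_whisker[OF i2x l j(2) v_hom k v_j2[symmetric]] .
  have runit_inj: "(k \<cdot> runit W X Y) \<cdot> inj1 C W Y = (k \<cdot> v) \<cdot> j1"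
      "(k \<cdot> runit W X Y) \<cdot> inj2 C W Y = (k \<cdot> v) \<cdot> j3"
    using comp_eq_whisker[OF i1y r j(1) v_hom k v_j1_runit[symmetric]]
      comp_eq_whisker[OF i2y r j(3) v_hom k v_j3[symmetric]] .
  have copair_x_inj: "(u \<cdot> copair C (wmap c) (lmap c)) \<cdot> inj1 C W X = (u \<cdot> s) \<cdot> j1"
      "(u \<cdot> copair C (wmap c) (lmap c)) \<cdot> inj2 C W X = (u \<cdot> s) \<cdot> j2"
    using comp_eq_whisker[OF i1x cx j(1) s_hom u] comp_eq_whisker[OF i2x cx j(2) s_hom u]
      copair_inj1[OF w_hom x_hom] copair_inj2[OF w_hom x_hom] s_j1 s_j2 by simp_all
  have copair_y_inj: "(u \<cdot> copair C (wmap c) (rmap c)) \<cdot> inj1 C W Y = (u \<cdot> s) \<cdot> j1"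
      "(u \<cdot> copair C (wmap c) (rmap c)) \<cdot> inj2 C W Y = (u \<cdot> s) \<cdot> j3"
    using comp_eq_whisker[OF i1y cy j(1) s_hom u] comp_eq_whisker[OF i2y cy j(3) s_hom u]
      copair_inj1[OF w_hom y_hom] copair_inj2[OF w_hom y_hom] s_j1 s_j3 by simp_all
  show ?thesis
  proof
    assume "k \<cdot> v = u \<cdot> s"
    then show "k \<cdot> lunit W X Y = u \<cdot> copair C (wmap c) (lmap c) \<and>
        k \<cdot> runit W X Y = u \<cdot> copair C (wmap c) (rmap c)"
      using cop_ext[OF o(1,2) comp_hom[OF l k] comp_hom[OF cx u]]
        cop_ext[OF o(1,3) comp_hom[OF r k] comp_hom[OF cy u]]
        lunit_inj runit_inj copair_x_inj copair_y_inj by simp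
  next
    assume "k \<cdot> lunit W X Y = u \<cdot> copair C (wmap c) (lmap c) \<and>
        k \<cdot> runit W X Y = u \<cdot> copair C (wmap c) (rmap c)"
    then show "k \<cdot> v = u \<cdot> s"
      using coproduct3_ext[OF comp_hom[OF v_hom k] comp_hom[OF s_hom u]]
        lunit_inj runit_inj copair_x_inj copair_y_inj by simp
  qed
qed

definition free_wcs where
  "free_wcs = \<lparr>apex = Ct, lobj = lobj c, lmap = \<nu> \<cdot> lmap c, robj = robj c, rmap = \<nu> \<cdot> rmap c,
     wobj = wobj c, wmap = \<nu> \<cdot> wmap c\<rparr>"

definition unit_mor where
  "unit_mor = \<lparr>ma = \<nu>, mf = Id C (lobj c), mg = Id C (robj c), mh = Id C (wobj c)\<rparr>"

lemma wcospan_free_wcs: "wcospan C free_wcs"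
  unfolding wcospan_def free_wcs_def
  using Ct_obj comp_hom[OF w_hom \<nu>_hom] comp_hom[OF x_hom \<nu>_hom] comp_hom[OF y_hom \<nu>_hom] by simp

lemma mcs_free_wcs: "mcs C free_wcs \<mu>"
proof -
  have "\<mu> \<cdot> lunit W X Y = \<nu> \<cdot> copair C (wmap c) (lmap c) \<and>
      \<mu> \<cdot> runit W X Y = \<nu> \<cdot> copair C (wmap c) (rmap c)"
    using comp_v_iff[OF \<mu>_hom \<nu>_hom] pushout_commutes by simp
  then show ?thesis
    unfolding mcs_def internal_mult_iff
    using wcospan_free_wcs \<mu>_hom comp_copair[OF w_hom x_hom \<nu>_hom] comp_copair[OF w_hom y_hom \<nu>_hom]
    by (simp add: free_wcs_def)
qed

lemma cs_mor_unit_mor: "cs_mor C c free_wcs unit_mor"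
  unfolding cs_mor_def
  using wcospan wcospan_free_wcs \<nu>_hom id_hom[OF objs(1)] id_hom[OF objs(2)] id_hom[OF objs(3)]
    comp_id[OF comp_hom[OF w_hom \<nu>_hom]] comp_id[OF comp_hom[OF x_hom \<nu>_hom]]
    comp_id[OF comp_hom[OF y_hom \<nu>_hom]]
  by (simp add: free_wcs_def unit_mor_def)

lemma pbmap_free_wcs: "pbmap C free_wcs c' \<psi> = pbmap C c c' \<psi>"
  by (simp add: pbmap_def free_wcs_def)

lemma cs_comp_unit_mor_iff:
  assumes "cs_mor C free_wcs c' \<psi>"
  shows "cs_comp C \<psi> unit_mor = \<phi> \<longleftrightarrow>
    ma \<phi> = ma \<psi> \<cdot> \<nu> \<and> mf \<phi> = mf \<psi> \<and> mg \<phi> = mg \<psi> \<and> mh \<phi> = mh \<psi>"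
proof -
  have "mf \<psi> \<in> hom C X (lobj c')" "mg \<psi> \<in> hom C Y (robj c')" "mh \<psi> \<in> hom C W (wobj c')"
    using assms unfolding cs_mor_def by (simp_all add: free_wcs_def)
  then show ?thesis
    using comp_id by (cases \<phi>) (auto simp: cs_comp_def unit_mor_def)
qed

lemma unit_mor_universal:
  assumes m': "mcs C c' m'" and \<phi>: "cs_mor C c c' \<phi>"
  shows "\<exists>!\<psi>. mcs_mor C free_wcs \<mu> c' m' \<psi> \<and> cs_comp C \<psi> unit_mor = \<phi>"
proof -
  let ?Q = "pbmap C c c' \<phi>" and ?a = "ma \<phi>"
  have a: "?a \<in> hom C (apex c) (apex c')" and f: "mf \<phi> \<in> hom C X (lobj c')"
    and g: "mg \<phi> \<in> hom C Y (robj c')" and h: "mh \<phi> \<in> hom C W (wobj c')"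
    and fx: "lmap c' \<cdot> mf \<phi> = ?a \<cdot> lmap c" and gy: "rmap c' \<cdot> mg \<phi> = ?a \<cdot> rmap c"
    and hw: "wmap c' \<cdot> mh \<phi> = ?a \<cdot> wmap c"
    using \<phi> unfolding cs_mor_def by simp_all
  have im: "internal_mult C c' m'" and wc': "wcospan C c'" using m' unfolding mcs_def by simp_all
  have mQ: "m' \<cdot> ?Q \<in> hom C (PB C W X Y) (apex c')"
    using comp_hom[OF pbmap_hom[OF \<phi>]] im unfolding internal_mult_iff by blast
  have "?a \<cdot> s = (m' \<cdot> ?Q) \<cdot> v"
    using comp_v_iff[OF mQ a] mult_pbmap_lunit[OF im \<phi>] mult_pbmap_runit[OF im \<phi>] by simp
  from pushout_universal[OF a mQ this]
  obtain t where t: "t \<in> hom C Ct (apex c')" "t \<cdot> \<nu> = ?a" "t \<cdot> \<mu> = m' \<cdot> ?Q"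
    and t_unique: "\<And>t'. t' \<in> hom C Ct (apex c') \<Longrightarrow> t' \<cdot> \<nu> = ?a \<Longrightarrow> t' \<cdot> \<mu> = m' \<cdot> ?Q \<Longrightarrow> t' = t"
    by blast
  define \<psi> where "\<psi> = \<lparr>ma = t, mf = mf \<phi>, mg = mg \<phi>, mh = mh \<phi>\<rparr>"
  have "cs_mor C free_wcs c' \<psi>"
    unfolding cs_mor_def
    using wcospan_free_wcs wc' t f g h fx gy hw
      comp_assoc[OF x_hom \<nu>_hom t(1)] comp_assoc[OF y_hom \<nu>_hom t(1)] comp_assoc[OF w_hom \<nu>_hom t(1)]
    by (simp add: free_wcs_def \<psi>_def)
  then have "mcs_mor C free_wcs \<mu> c' m' \<psi> \<and> cs_comp C \<psi> unit_mor = \<phi>"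
    unfolding mcs_mor_def cs_comp_unit_mor_iff[OF \<open>cs_mor C free_wcs c' \<psi>\<close>] pbmap_free_wcs
    using mcs_free_wcs m' t by (simp add: \<psi>_def pbmap_def)
  moreover have "\<psi>' = \<psi>" if "mcs_mor C free_wcs \<mu> c' m' \<psi>'" "cs_comp C \<psi>' unit_mor = \<phi>" for \<psi>'
  proof -
    have \<psi>': "cs_mor C free_wcs c' \<psi>'" "ma \<psi>' \<cdot> \<mu> = m' \<cdot> pbmap C c c' \<psi>'"
      using that(1) unfolding mcs_mor_def pbmap_free_wcs by simp_all
    then have "ma \<psi>' \<in> hom C Ct (apex c')" unfolding cs_mor_def by (simp add: free_wcs_def)
    moreover have "?a = ma \<psi>' \<cdot> \<nu>" "mf \<phi> = mf \<psi>'" "mg \<phi> = mg \<psi>'" "mh \<phi> = mh \<psi>'"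
      using that(2) cs_comp_unit_mor_iff[OF \<psi>'(1)] by simp_all
    moreover from this have "pbmap C c c' \<psi>' = ?Q" by (simp add: pbmap_def)
    ultimately show ?thesis
      using t_unique \<psi>'(2) by (simp add: \<psi>_def)
  qed
  ultimately show ?thesis by blast
qed

end

theorem theorem3p1:
  fixes C :: "('o,'m) cat" and c :: "('o,'m) wcs"
    and T :: 'o and j1 j2 j3 s v :: 'm and Ct :: 'o and \<nu> \<mu> :: 'm
  assumes "category C" and "pointed C"
    and "has_finite_limits C" and "has_finite_colimits C"
    and "wcospan C c"
    \<comment> \<open>W + X + Y, with injections j1, j2, j3\<close>
    and "is_coproduct3 C (wobj c) (lobj c) (robj c) (T, j1, j2, j3)"
    \<comment> \<open>s = [w,x,y]\<close>
    and "s \<in> hom C T (apex c)"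
    and "Comp C s j1 = wmap c" and "Comp C s j2 = lmap c" and "Comp C s j3 = rmap c"
    \<comment> \<open>v = \<langle>[\<iota>1,\<iota>2,0],[\<iota>1,0,\<iota>2]\<rangle>\<close>
    and "v \<in> hom C T (PB C (wobj c) (lobj c) (robj c))"
    and "Comp C (pr1 C (wobj c) (lobj c) (robj c)) (Comp C v j1) = inj1 C (wobj c) (lobj c)"
    and "Comp C (pr1 C (wobj c) (lobj c) (robj c)) (Comp C v j2) = inj2 C (wobj c) (lobj c)"
    and "Comp C (pr1 C (wobj c) (lobj c) (robj c)) (Comp C v j3)
           = zero_map C (robj c) (copObj C (wobj c) (lobj c))"
    and "Comp C (pr2 C (wobj c) (lobj c) (robj c)) (Comp C v j1) = inj1 C (wobj c) (robj c)"
    and "Comp C (pr2 C (wobj c) (lobj c) (robj c)) (Comp C v j2)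
           = zero_map C (lobj c) (copObj C (wobj c) (robj c))"
    and "Comp C (pr2 C (wobj c) (lobj c) (robj c)) (Comp C v j3) = inj2 C (wobj c) (robj c)"
    \<comment> \<open>the pushout square, with \<nu> : A -> Ct and \<mu> : PB -> Ct\<close>
    and "is_pushout C s v (Ct, \<nu>, \<mu>)"
  shows "let ct = \<lparr>apex = Ct, lobj = lobj c, lmap = Comp C \<nu> (lmap c),
                   robj = robj c, rmap = Comp C \<nu> (rmap c),
                   wobj = wobj c, wmap = Comp C \<nu> (wmap c)\<rparr>;
             \<eta> = \<lparr>ma = \<nu>, mf = Id C (lobj c), mg = Id C (robj c), mh = Id C (wobj c)\<rparr>
         in mcs C ct \<mu> \<and> cs_mor C c ct \<eta> \<and>
            (\<forall>c' m' \<phi>. mcs C c' m' \<longrightarrow> cs_mor C c c' \<phi> \<longrightarrow>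
               (\<exists>!\<psi>. mcs_mor C ct \<mu> c' m' \<psi> \<and> cs_comp C \<psi> \<eta> = \<phi>))"
proof -
  interpret free_multiplication C c T j1 j2 j3 s v Ct \<nu> \<mu>
    by unfold_locales (rule assms)+
  show ?thesis
    using mcs_free_wcs cs_mor_unit_mor unit_mor_universal
    unfolding Let_def free_wcs_def unit_mor_def by blast
qed

end
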